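(* Let $n\ge3$, $1<k<n/2$, $p>\frac{(n+2)k}{n-2k}$, and let $u$ be a regular solution of (1.6). If the limit $B:=\lim_{r\to\infty}u(r)r^{\frac{2k}{p-k}}$ exists and $B>0$, then $$B=A:=\Big(\tfrac1kC_{n-1}^{k-1}\Big)^{\frac{1}{p-k}}\Big(\tfrac{2k}{p-k}\Big)^{\frac{k}{p-k}}\Big(n-\tfrac{2pk}{p-k}\Big)^{\frac{1}{p-k}}.$$
   Context: Problem (1.6) is: given $\rho>0$, find $u$ with $-\tfrac{1}{k}C_{n-1}^{k-1}(r^{n-k}|u'|^{k-1}u')'=r^{n-1}u^{p}$, $u(r)>0$ for all $r>0$, $u'(0)=0$, $u(0)=\rho$, where $C_{n-1}^{k-1}$ is the binomial coefficient. A solution $u$ of (1.6) is regular if $x\mapsto u(|x|)$ belongs to $C^2(\mathbb{R}^n)$. *)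

theory Defs
  imports "HOL-Analysis.Analysis"
begin

definition C2_on_UNIV :: "('a::real_normed_vector \<Rightarrow> real) \<Rightarrow> bool" where
  "C2_on_UNIV f \<longleftrightarrow>
     (\<exists>f' :: 'a \<Rightarrow> ('a \<Rightarrow>\<^sub>L real). \<exists>f'' :: 'a \<Rightarrow> ('a \<Rightarrow>\<^sub>L ('a \<Rightarrow>\<^sub>L real)).
        (\<forall>x. (f has_derivative blinfun_apply (f' x)) (at x)) \<and>
        (\<forall>x. (f' has_derivative blinfun_apply (f'' x)) (at x)) \<and>
        continuous_on UNIV f'')"

definition solves_1_6 :: "nat \<Rightarrow> nat \<Rightarrow> real \<Rightarrow> real \<Rightarrow> (real \<Rightarrow> real) \<Rightarrow> bool" where
  "solves_1_6 n k p \<rho> u \<longleftrightarrow>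
     \<rho> > 0 \<and> u 0 = \<rho> \<and>
     (u has_real_derivative 0) (at 0 within {0..}) \<and>
     (\<forall>r>0. u r > 0) \<and>
     (\<forall>r>0. u differentiable (at r)) \<and>
     (\<forall>r>0. ((\<lambda>s. - (1 / real k) * real ((n - 1) choose (k - 1)) *
                  (s ^ (n - k) * \<bar>deriv u s\<bar> ^ (k - 1) * deriv u s))
               has_real_derivative (r ^ (n - 1) * u r powr p)) (at r))"

definition regular_radial :: "'n::finite itself \<Rightarrow> (real \<Rightarrow> real) \<Rightarrow> bool" where
  "regular_radial _ u \<longleftrightarrow> C2_on_UNIV (\<lambda>x :: real ^ 'n. u (norm x))"

end

theory Submission
  imports Defs
begin

text \<open>Write m = 2k/(p-k), a = n - m p and c = C(n-1,k-1)/k, and let F be the flux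
  -c r^(n-k) |u'|^(k-1) u', so that F' = r^(n-1) u^p. If u r^m tends to B, then
  F' / r^(a-1) tends to B^p, so by l'Hopital F / r^a tends to B^p / a, i.e.
  -u' r^(m+1) tends to (B^p / (a c))^(1/k). Applying l'Hopital once more to (1/u) / r^m
  shows that this limit must equal m B; solving (m B)^k = B^p / (a c) for B gives the
  formula.\<close>

lemma lhospital_div_powr_at_top:
  fixes F f :: "real \<Rightarrow> real" and a L :: real
  assumes "a > 0"
    and "\<forall>\<^sub>F x in at_top. (F has_real_derivative f x) (at x)"
    and "((\<lambda>x. f x / x powr (a - 1)) \<longlongrightarrow> L) at_top"
  shows "((\<lambda>x. F x / x powr a) \<longlongrightarrow> L / a) at_top"
proof (rule lhospital_at_top_at_top[where g' = "\<lambda>x. a * x powr (a - 1)" and f' = f])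
  show "LIM x at_top. x powr a :> at_top"
    using real_powr_at_top \<open>a > 0\<close> by blast
  show "\<forall>\<^sub>F x in at_top. a * x powr (a - 1) \<noteq> 0"
    using eventually_gt_at_top[of 0] by eventually_elim (use \<open>a > 0\<close> in auto)
  show "\<forall>\<^sub>F x in at_top. ((\<lambda>x. x powr a) has_real_derivative a * x powr (a - 1)) (at x)"
    using eventually_gt_at_top[of 0] by eventually_elim (rule has_real_derivative_powr)
  have "((\<lambda>x. f x / x powr (a - 1) / a) \<longlongrightarrow> L / a) at_top"
    by (intro tendsto_divide assms(3) tendsto_const) (use \<open>a > 0\<close> in auto)
  then show "((\<lambda>x. f x / (a * x powr (a - 1))) \<longlongrightarrow> L / a) at_top"
    by (simp add: field_simps)
qed (fact assms(2))

lemma tendsto_scaled_deriv_eq: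
  fixes u u' :: "real \<Rightarrow> real" and m B D :: real
  assumes "m > 0" "B > 0"
    and "\<forall>\<^sub>F x in at_top. u x > 0 \<and> (u has_real_derivative u' x) (at x)"
    and lim_u: "((\<lambda>x. u x * x powr m) \<longlongrightarrow> B) at_top"
    and lim_u': "((\<lambda>x. - u' x * x powr (m + 1)) \<longlongrightarrow> D) at_top"
  shows "D = m * B"
proof -
  have "((\<lambda>x. (- u' x * x powr (m + 1)) / (u x * x powr m) ^ 2) \<longlongrightarrow> D / B ^ 2) at_top"
    using \<open>B > 0\<close> by (intro tendsto_divide tendsto_power lim_u lim_u') auto
  moreover have "\<forall>\<^sub>F x in at_top. (- u' x * x powr (m + 1)) / (u x * x powr m) ^ 2
      = - (u' x * inverse (u x ^ 2)) / x powr (m - 1)"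
    using eventually_gt_at_top[of 0] assms(3)
  proof eventually_elim
    case (elim x)
    then have "x powr (m + 1) = x powr m * x" "x powr (m - 1) = x powr m / x"
      by (simp_all add: powr_add powr_diff)
    with elim show ?case by (simp add: field_simps power2_eq_square)
  qed
  ultimately have lim_f: "((\<lambda>x. - (u' x * inverse (u x ^ 2)) / x powr (m - 1)) \<longlongrightarrow> D / B ^ 2) at_top"
    by (rule Lim_transform_eventually)
  have deriv_inv: "\<forall>\<^sub>F x in at_top.
      ((\<lambda>x. inverse (u x)) has_real_derivative - (u' x * inverse (u x ^ 2))) (at x)"
    using assms(3) by eventually_elim (metis DERIV_inverse_fun less_irrefl numeral_2_eq_2)
  have "((\<lambda>x. inverse (u x) / x powr m) \<longlongrightarrow> D / B ^ 2 / m) at_top"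
    by (rule lhospital_div_powr_at_top[OF \<open>m > 0\<close> deriv_inv lim_f])
  moreover have "((\<lambda>x. inverse (u x) / x powr m) \<longlongrightarrow> inverse B) at_top"
    using tendsto_inverse[OF lim_u] \<open>B > 0\<close> by (simp add: field_simps)
  ultimately have "D / B ^ 2 / m = inverse B"
    using tendsto_unique[OF trivial_limit_at_top_linorder] by blast
  with assms(1,2) show ?thesis
    by (simp add: field_simps power2_eq_square)
qed

lemma power_decay_constant:
  fixes B c m a p k :: real
  assumes "B > 0" "c > 0" "m > 0" "a > 0" "p > k"
    and "(m * B) powr k = B powr p / (a * c)"
  shows "B = c powr (1 / (p - k)) * m powr (k / (p - k)) * a powr (1 / (p - k))"
proof -
  have "B powr (p - k) = c * m powr k * a"
    using assms by (simp add: powr_mult powr_diff field_simps)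
  moreover have "B = (B powr (p - k)) powr (1 / (p - k))"
    using assms(1,5) by (simp add: powr_powr)
  ultimately have "B = (c * m powr k * a) powr (1 / (p - k))"
    by simp
  with assms(2-4) show ?thesis
    by (simp add: powr_mult powr_powr)
qed

lemma supercritical_exponent_bounds:
  fixes n k p :: real
  assumes "0 < k" "k < n / 2" "p > (n + 2) * k / (n - 2 * k)"
  shows "k < p" and "2 * p * k / (p - k) < n"
proof -
  have nk: "n - 2 * k > 0" using assms(2) by simp
  then have "p * (n - 2 * k) > (n + 2) * k"
    using assms(3) by (simp add: field_simps)
  moreover have "(n + 2) * k \<ge> k * (n - 2 * k)" "(n + 2) * k \<ge> n * k"
    using assms(1) nk by (simp_all add: algebra_simps)
  ultimately have "p * (n - 2 * k) > k * (n - 2 * k)" and pnk: "p * (n - 2 * k) > n * k"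
    by linarith+
  then show "k < p" using nk by simp
  with pnk show "2 * p * k / (p - k) < n"
    by (simp add: field_simps)
qed

definition flux_coeff :: "nat \<Rightarrow> nat \<Rightarrow> real" where
  "flux_coeff n k = real ((n - 1) choose (k - 1)) / real k"

definition flux :: "nat \<Rightarrow> nat \<Rightarrow> (real \<Rightarrow> real) \<Rightarrow> real \<Rightarrow> real" where
  "flux n k u s = - flux_coeff n k * (s ^ (n - k) * \<bar>deriv u s\<bar> ^ (k - 1) * deriv u s)"

lemma flux_coeff_pos: "0 < k \<Longrightarrow> k \<le> n \<Longrightarrow> flux_coeff n k > 0"
  by (simp add: flux_coeff_def)

lemma solves_1_6_flux_deriv:
  assumes "solves_1_6 n k p \<rho> u" "r > 0"
  shows "(flux n k u has_real_derivative r ^ (n - 1) * u r powr p) (at r)"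
  using assms unfolding solves_1_6_def flux_def flux_coeff_def by simp

lemma solves_1_6_flux_limit:
  fixes m a B :: real
  assumes "solves_1_6 n k p \<rho> u" "n \<ge> 1" "a > 0" "B > 0" "real n - a = m * p"
    and lim_u: "((\<lambda>r. u r * r powr m) \<longlongrightarrow> B) at_top"
  shows "((\<lambda>r. flux n k u r / r powr a) \<longlongrightarrow> B powr p / a) at_top"
proof (rule lhospital_div_powr_at_top[OF \<open>a > 0\<close>])
  show "\<forall>\<^sub>F r in at_top. (flux n k u has_real_derivative r ^ (n - 1) * u r powr p) (at r)"
    using eventually_gt_at_top[of 0] by eventually_elim (rule solves_1_6_flux_deriv[OF assms(1)])
  have "((\<lambda>r. (u r * r powr m) powr p) \<longlongrightarrow> B powr p) at_top"
    using \<open>B > 0\<close> by (intro tendsto_powr lim_u tendsto_const) auto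
  moreover have "\<forall>\<^sub>F r in at_top. (u r * r powr m) powr p = r ^ (n - 1) * u r powr p / r powr (a - 1)"
    using eventually_gt_at_top[of 0]
  proof eventually_elim
    case (elim r)
    have "u r > 0" using assms(1) elim by (simp add: solves_1_6_def)
    have n1: "real n - 1 = real (n - 1)"
      using \<open>n \<ge> 1\<close> by (simp add: of_nat_diff)
    have "r ^ (n - 1) = r powr (real n - 1)"
      unfolding n1 using elim by (simp add: powr_realpow)
    also have "\<dots> = r powr (m * p) * r powr (a - 1)"
      using \<open>real n - a = m * p\<close> by (simp add: powr_add[symmetric] algebra_simps)
    finally show ?case
      using \<open>u r > 0\<close> elim by (simp add: powr_mult powr_powr)
  qed
  ultimately show "((\<lambda>r. r ^ (n - 1) * u r powr p / r powr (a - 1)) \<longlongrightarrow> B powr p) at_top"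
    by (rule Lim_transform_eventually)
qed

lemma odd_signed_power_nonpos:
  fixes x :: real
  assumes "x \<le> 0" "k > 0"
  shows "\<bar>x\<bar> ^ (k - 1) * x = - ((- x) ^ k)"
proof -
  obtain j where "k = Suc j" using \<open>k > 0\<close> by (cases k) auto
  with assms show ?thesis by (simp add: abs_of_nonpos)
qed

lemma flux_pos_eq:
  assumes "0 < k" "k \<le> n" "r > 0" "flux n k u r > 0"
  shows "deriv u r < 0" and "flux n k u r = flux_coeff n k * (r powr (real (n - k)) * (- deriv u r) ^ k)"
proof -
  have c: "flux_coeff n k > 0" using assms(1,2) by (rule flux_coeff_pos)
  show neg: "deriv u r < 0"
  proof (rule ccontr)
    assume "\<not> deriv u r < 0"
    then have "flux_coeff n k * (r ^ (n - k) * \<bar>deriv u r\<bar> ^ (k - 1) * deriv u r) \<ge> 0"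
      using \<open>r > 0\<close> c by (intro mult_nonneg_nonneg) auto
    with assms(4) show False
      unfolding flux_def by linarith
  qed
  then show "flux n k u r = flux_coeff n k * (r powr (real (n - k)) * (- deriv u r) ^ k)"
    using odd_signed_power_nonpos[of "deriv u r" k] \<open>0 < k\<close> \<open>r > 0\<close>
    by (simp add: flux_def powr_realpow mult.assoc)
qed

lemma tendsto_scaled_deriv_of_flux:
  fixes a m L :: real
  assumes "0 < k" "k \<le> n" "L > 0" "real (n - k) - a = (m + 1) * real k"
    and lim_flux: "((\<lambda>r. flux n k u r / r powr a) \<longlongrightarrow> L) at_top"
  shows "((\<lambda>r. - deriv u r * r powr (m + 1)) \<longlongrightarrow> (L / flux_coeff n k) powr (1 / real k)) at_top"
proof -
  have c: "flux_coeff n k > 0" using assms(1,2) by (rule flux_coeff_pos)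
  have "((\<lambda>r. (flux n k u r / r powr a / flux_coeff n k) powr (1 / real k))
      \<longlongrightarrow> (L / flux_coeff n k) powr (1 / real k)) at_top"
    using \<open>L > 0\<close> c by (intro tendsto_powr tendsto_divide lim_flux tendsto_const) auto
  moreover have "\<forall>\<^sub>F r in at_top. (flux n k u r / r powr a / flux_coeff n k) powr (1 / real k)
      = - deriv u r * r powr (m + 1)"
    using eventually_gt_at_top[of 0] order_tendstoD(1)[OF lim_flux \<open>L > 0\<close>]
  proof eventually_elim
    case (elim r)
    then have "flux n k u r > 0" by (simp add: zero_less_divide_iff)
    note flux_r = flux_pos_eq[OF \<open>0 < k\<close> \<open>k \<le> n\<close> \<open>r > 0\<close> this]
    define v where "v = - deriv u r * r powr (m + 1)"
    have "v > 0" unfolding v_def using flux_r(1) \<open>r > 0\<close> by (simp add: mult_neg_pos)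
    have "flux n k u r / r powr a / flux_coeff n k = r powr (real (n - k) - a) * (- deriv u r) ^ k"
      using c flux_r(2) by (simp add: powr_diff)
    also have "r powr (real (n - k) - a) = (r powr (m + 1)) ^ k"
      using assms(4) \<open>r > 0\<close> by (simp add: powr_realpow[symmetric] powr_powr)
    also have "(r powr (m + 1)) ^ k * (- deriv u r) ^ k = v ^ k"
      unfolding v_def by (simp add: power_mult_distrib[symmetric] mult.commute)
    also have "\<dots> = v powr real k"
      using \<open>v > 0\<close> by (simp add: powr_realpow)
    finally show ?case
      using \<open>v > 0\<close> \<open>0 < k\<close> by (simp add: v_def powr_powr)
  qed
  ultimately show ?thesis
    by (rule Lim_transform_eventually)
qed

theorem mainTheorem9:
  fixes n k :: nat and p \<rho> B :: real and u :: "real \<Rightarrow> real"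
  assumes hn: "n = CARD('n::finite)" and "n \<ge> 3"
    and "1 < k" and "real k < real n / 2"
    and "p > (real n + 2) * real k / (real n - 2 * real k)"
    and "solves_1_6 n k p \<rho> u"
    and "regular_radial TYPE('n) u"
    and "((\<lambda>r. u r * r powr (2 * real k / (p - real k))) \<longlongrightarrow> B) at_top"
    and "B > 0"
  shows "B = ((1 / real k) * real ((n - 1) choose (k - 1))) powr (1 / (p - real k))
           * (2 * real k / (p - real k)) powr (real k / (p - real k))
           * (real n - 2 * p * real k / (p - real k)) powr (1 / (p - real k))"
proof -
  define m where "m = 2 * real k / (p - real k)"
  define a where "a = real n - 2 * p * real k / (p - real k)"
  define c where "c = flux_coeff n k"
  have "k < p" and "a > 0"
    using supercritical_exponent_bounds[of "real k" "real n" p] assms(3-5) by (auto simp: a_def)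
  then have "m > 0" using assms(3) by (simp add: m_def)
  have "k \<le> n" "n \<ge> 1" using assms(2,4) by linarith+
  have lim_u: "((\<lambda>r. u r * r powr m) \<longlongrightarrow> B) at_top"
    using assms(8) by (simp add: m_def)
  have "real n - a = m * p" "real (n - k) - a = (m + 1) * real k"
    using \<open>k < p\<close> \<open>k \<le> n\<close> by (simp_all add: a_def m_def of_nat_diff field_simps)
  then have "((\<lambda>r. flux n k u r / r powr a) \<longlongrightarrow> B powr p / a) at_top"
    using solves_1_6_flux_limit[OF assms(6) \<open>n \<ge> 1\<close> \<open>a > 0\<close> \<open>B > 0\<close> _ lim_u] by blast
  then have lim_u': "((\<lambda>r. - deriv u r * r powr (m + 1)) \<longlongrightarrow> (B powr p / a / c) powr (1 / real k)) at_top"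
    using \<open>real (n - k) - a = (m + 1) * real k\<close> \<open>k \<le> n\<close> \<open>a > 0\<close> assms(3,9)
    unfolding c_def by (intro tendsto_scaled_deriv_of_flux) auto
  have "\<forall>\<^sub>F r in at_top. u r > 0 \<and> (u has_real_derivative deriv u r) (at r)"
    using eventually_gt_at_top[of 0]
    by eventually_elim (use assms(6) in \<open>simp add: solves_1_6_def DERIV_deriv_iff_real_differentiable\<close>)
  then have "(B powr p / a / c) powr (1 / real k) = m * B"
    using tendsto_scaled_deriv_eq[OF \<open>m > 0\<close> \<open>B > 0\<close> _ lim_u lim_u'] by blast
  moreover have "c > 0" unfolding c_def using assms(3) \<open>k \<le> n\<close> by (simp add: flux_coeff_pos)
  ultimately have "(m * B) powr real k = ((B powr p / a / c) powr (1 / real k)) powr real k"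
    by simp
  also have "\<dots> = B powr p / (a * c)"
    using assms(3) \<open>a > 0\<close> \<open>c > 0\<close> by (simp add: powr_powr)
  finally have "(m * B) powr real k = B powr p / (a * c)" .
  then show ?thesis
    using power_decay_constant \<open>m > 0\<close> \<open>B > 0\<close> \<open>a > 0\<close> \<open>c > 0\<close> \<open>k < p\<close>
    by (simp add: m_def a_def c_def flux_coeff_def)
qed

end
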